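(* Let $n>5$ and let $f$ be a permutation of $V(\overline{C_n})$. Suppose there exist a vertex $v$ and two distinct vertices $u,w$, both different from $v$, such that $v$ is adjacent in $\overline{C_n}$ to neither $u$ nor $w$, while $f(v)$ is adjacent in $\overline{C_n}$ to both $f(u)$ and $f(w)$. Then $\delta_f(\overline{C_n})>4$.
   Context: $C_n$ is the cycle on vertices $v_1,\dots,v_n$ (with $v_i$ adjacent to $v_{i+1}$, indices mod $n$), and $\overline{C_n}$ is its complement: two distinct vertices are adjacent in $\overline{C_n}$ iff they are not adjacent in $C_n$. $d(x,y)$ denotes the distance in $\overline{C_n}$. For a permutation $f$ of the vertex set and distinct vertices $x,y$, $\delta_f(x,y)=|d(x,y)-d(f(x),f(y))|$, and $\delta_f(\overline{C_n})=\sum\delta_f(x,y)$ over all unordered pairs $\{x,y\}$ of distinct vertices. *)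

theory Defs
  imports Main
begin

text \<open>Vertices of C_n are 0..n-1 (v_{i+1} corresponds to i); vertex i is adjacent
  in C_n to (i+1) mod n.\<close>

definition cycle_adj :: "nat \<Rightarrow> nat \<Rightarrow> nat \<Rightarrow> bool" where
  "cycle_adj n x y \<longleftrightarrow> x < n \<and> y < n \<and> ((x + 1) mod n = y \<or> (y + 1) mod n = x)"

definition cocycle_adj :: "nat \<Rightarrow> nat \<Rightarrow> nat \<Rightarrow> bool" where
  "cocycle_adj n x y \<longleftrightarrow> x < n \<and> y < n \<and> x \<noteq> y \<and> \<not> cycle_adj n x y"

definition cowalk :: "nat \<Rightarrow> nat \<Rightarrow> nat \<Rightarrow> nat \<Rightarrow> bool" where
  "cowalk n k x y \<longleftrightarrow> (\<exists>p :: nat list. length p = k + 1 \<and> p ! 0 = x \<and> p ! k = y \<and>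
      (\<forall>i<k. cocycle_adj n (p ! i) (p ! (i + 1))))"

definition codist :: "nat \<Rightarrow> nat \<Rightarrow> nat \<Rightarrow> nat" where
  "codist n x y = (LEAST k. cowalk n k x y)"

definition delta_pair :: "nat \<Rightarrow> (nat \<Rightarrow> nat) \<Rightarrow> nat \<Rightarrow> nat \<Rightarrow> nat" where
  "delta_pair n f x y = nat \<bar>int (codist n x y) - int (codist n (f x) (f y))\<bar>"

definition delta_total :: "nat \<Rightarrow> (nat \<Rightarrow> nat) \<Rightarrow> nat" where
  "delta_total n f = (\<Sum>(x, y) \<in> {(x, y). x < y \<and> y < n}. delta_pair n f x y)"

end

theory Submission
  imports Defs
begin

text \<open>For \<open>n \<ge> 5\<close> the complement of \<open>C\<^sub>n\<close> has diameter 2: cycle-adjacent vertices are at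
  distance 2 and all other pairs of distinct vertices at distance 1. Hence \<open>\<delta>\<^sub>f\<close> counts the
  unordered pairs whose adjacency in \<open>C\<^sub>n\<close> is flipped by \<open>f\<close>. The vertex \<open>v\<close> loses its two cycle
  neighbours \<open>u\<close>, \<open>w\<close> and gains the two preimages \<open>a\<close>, \<open>b\<close> of the cycle neighbours of \<open>f v\<close>,
  giving four flipped pairs through \<open>v\<close>. A fifth one comes from \<open>u\<close>: neither cycle neighbour
  of \<open>f u\<close> is \<open>f v\<close>, but \<open>u\<close> has only one cycle neighbour besides \<open>v\<close>, so \<open>u\<close> also gains a
  new neighbour \<open>z \<noteq> v\<close>.\<close>

lemma cycle_adj_sym: "cycle_adj n x y \<longleftrightarrow> cycle_adj n y x"
  unfolding cycle_adj_def by auto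

lemma cycle_adj_iff:
  "cycle_adj n x y \<longleftrightarrow> x < n \<and> y < n \<and>
     (y = (if x + 1 = n then 0 else x + 1) \<or> y = (if x = 0 then n - 1 else x - 1))"
proof (cases "x < n \<and> y < n")
  case True
  have succ: "(z + 1) mod n = (if z + 1 = n then 0 else z + 1)" if "z < n" for z
    using that by (cases "z + 1 = n") auto
  show ?thesis \<comment> \<open>\<open>simp only\<close> first, before \<open>simp\<close> turns \<open>(y + 1) mod n = 0\<close> into \<open>n dvd y + 1\<close>\<close>
    unfolding cycle_adj_def using True by (simp only: succ) auto
qed (auto simp: cycle_adj_def)

lemma cycle_adj_cases:
  assumes "cycle_adj n x y"
  obtains "x < n" "y = (if x + 1 = n then 0 else x + 1)"
    | "y < n" "x = (if y + 1 = n then 0 else y + 1)"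
proof -
  have "(x < n \<and> y = (if x + 1 = n then 0 else x + 1)) \<or> (y < n \<and> x = (if y + 1 = n then 0 else y + 1))"
    using assms unfolding cycle_adj_def by auto
  then show thesis
    using that by blast
qed

lemma cycle_adj_irrefl: "n > 1 \<Longrightarrow> \<not> cycle_adj n x x"
  unfolding cycle_adj_iff by auto

lemma cycle_adj_at_most_two:
  assumes "cycle_adj n x a" "cycle_adj n x b" "cycle_adj n x c" "a \<noteq> b"
  shows "c = a \<or> c = b"
  using assms unfolding cycle_adj_iff by auto

lemma cycle_adj_exists_two_neighbours:
  assumes "n > 2" "x < n"
  obtains y z where "y \<noteq> z" "cycle_adj n x y" "cycle_adj n x z"
  using assms by (intro that[of "if x + 1 = n then 0 else x + 1" "if x = 0 then n - 1 else x - 1"])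
    (auto simp: cycle_adj_iff)

lemma cocycle_adj_sym: "cocycle_adj n x y \<longleftrightarrow> cocycle_adj n y x"
  unfolding cocycle_adj_def using cycle_adj_sym by blast

lemma cocycle_adj_common_neighbour:
  assumes "n > 4" "cycle_adj n x y"
  obtains z where "cocycle_adj n x z" "cocycle_adj n z y"
proof -
  have succ_case: "\<exists>z. cocycle_adj n x z \<and> cocycle_adj n z (if x + 1 = n then 0 else x + 1)"
    if "x < n" for x
  proof (cases "x + 3 < n")
    case True
    with that assms(1) show ?thesis
      by (intro exI[of _ "x + 3"]) (simp add: cocycle_adj_def cycle_adj_iff; arith)
  next
    case False
    with that assms(1) show ?thesis
      by (intro exI[of _ "x + 3 - n"]) (simp add: cocycle_adj_def cycle_adj_iff; arith)
  qed
  from assms(2) show thesis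
    using succ_case that cocycle_adj_sym by (cases rule: cycle_adj_cases) blast+
qed

lemma cowalk_0_iff: "cowalk n 0 x y \<longleftrightarrow> x = y"
  unfolding cowalk_def by (auto intro!: exI[of _ "[x]"])

lemma cowalk_1_iff: "cowalk n 1 x y \<longleftrightarrow> cocycle_adj n x y"
  unfolding cowalk_def by (auto intro!: exI[of _ "[x, y]"])

lemma cowalk_2I: "cocycle_adj n x z \<Longrightarrow> cocycle_adj n z y \<Longrightarrow> cowalk n 2 x y"
  unfolding cowalk_def by (intro exI[of _ "[x, z, y]"]) (auto simp: less_Suc_eq numeral_2_eq_2)

lemma codist_eq:
  assumes "n > 4" "x < n" "y < n" "x \<noteq> y"
  shows "codist n x y = (if cycle_adj n x y then 2 else 1)"
proof (cases "cycle_adj n x y")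
  case True
  then obtain z where "cocycle_adj n x z" "cocycle_adj n z y"
    using assms(1) cocycle_adj_common_neighbour by blast
  then have "cowalk n 2 x y" by (rule cowalk_2I)
  moreover have "\<not> cowalk n k x y" if "k < 2" for k
  proof -
    have "k = 0 \<or> k = 1" using that by auto
    then show ?thesis
      using True assms(4) cowalk_0_iff cowalk_1_iff cocycle_adj_def by blast
  qed
  ultimately show ?thesis
    unfolding codist_def using True by (metis (mono_tags) Least_equality not_less)
next
  case False
  then have "cowalk n 1 x y" using assms cowalk_1_iff cocycle_adj_def by blast
  moreover have "\<not> cowalk n 0 x y" using assms(4) by (simp add: cowalk_0_iff)
  ultimately show ?thesis
    unfolding codist_def using False by (metis (mono_tags) Least_equality less_one not_less)
qed

definition flipped_pairs :: "nat \<Rightarrow> (nat \<Rightarrow> nat) \<Rightarrow> nat set set" where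
  "flipped_pairs n f = {{x, y} | x y. x < n \<and> y < n \<and> x \<noteq> y \<and>
     (cycle_adj n x y \<longleftrightarrow> \<not> cycle_adj n (f x) (f y))}"

lemma flipped_pairsI:
  assumes "n > 1" "x < n" "y < n" "cycle_adj n x y \<longleftrightarrow> \<not> cycle_adj n (f x) (f y)"
  shows "{x, y} \<in> flipped_pairs n f"
proof -
  have "x \<noteq> y" using assms cycle_adj_irrefl by blast
  with assms show ?thesis unfolding flipped_pairs_def by blast
qed

lemma finite_flipped_pairs: "finite (flipped_pairs n f)"
proof (rule finite_subset)
  show "flipped_pairs n f \<subseteq> Pow {..<n}" unfolding flipped_pairs_def by auto
qed simp

lemma delta_pair_eq:
  assumes "n > 4" "bij_betw f {..<n} {..<n}" "x < n" "y < n" "x \<noteq> y"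
  shows "delta_pair n f x y = (if cycle_adj n x y \<longleftrightarrow> cycle_adj n (f x) (f y) then 0 else 1)"
proof -
  have "f x < n" "f y < n"
    using assms(2-4) bij_betwE by auto
  moreover have "f x \<noteq> f y"
    using inj_on_contraD[OF bij_betw_imp_inj_on[OF assms(2)] assms(5)] assms(3,4) by simp
  ultimately have "codist n (f x) (f y) = (if cycle_adj n (f x) (f y) then 2 else 1)"
    using codist_eq[OF assms(1)] by blast
  moreover have "codist n x y = (if cycle_adj n x y then 2 else 1)"
    using assms(1,3-5) by (rule codist_eq)
  ultimately show ?thesis
    unfolding delta_pair_def by simp
qed

lemma delta_total_eq_card_flipped_pairs:
  assumes "n > 4" "bij_betw f {..<n} {..<n}"
  shows "delta_total n f = card (flipped_pairs n f)"
proof -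
  define P where "P = {(x, y). x < y \<and> y < n}"
  define flip where "flip = (\<lambda>(x, y). cycle_adj n x y \<longleftrightarrow> \<not> cycle_adj n (f x) (f y))"
  have "finite P" unfolding P_def by (rule finite_subset[of _ "{..<n} \<times> {..<n}"]) auto
  have "delta_total n f = (\<Sum>p\<in>P. if flip p then 1 else 0)"
    unfolding delta_total_def P_def[symmetric]
  proof (rule sum.cong)
    fix p assume "p \<in> P"
    then obtain x y where "p = (x, y)" "x < y" "y < n" unfolding P_def by blast
    then show "(case p of (x, y) \<Rightarrow> delta_pair n f x y) = (if flip p then 1 else 0)"
      using delta_pair_eq[OF assms, of x y] unfolding flip_def by auto
  qed simp
  also have "\<dots> = card {p \<in> P. flip p}"
    using \<open>finite P\<close> by (simp add: sum.inter_filter[symmetric])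
  also have "\<dots> = card ((\<lambda>(x, y). {x, y}) ` {p \<in> P. flip p})"
    by (rule card_image[symmetric]) (auto simp: inj_on_def P_def doubleton_eq_iff)
  also have "(\<lambda>(x, y). {x, y}) ` {p \<in> P. flip p} = flipped_pairs n f"
  proof
    show "(\<lambda>(x, y). {x, y}) ` {p \<in> P. flip p} \<subseteq> flipped_pairs n f"
      using flipped_pairsI[of n _ _ f] assms(1) unfolding P_def flip_def by auto
  next
    show "flipped_pairs n f \<subseteq> (\<lambda>(x, y). {x, y}) ` {p \<in> P. flip p}"
    proof
      fix e assume "e \<in> flipped_pairs n f"
      then obtain x y where e: "e = {x, y}" "x < n" "y < n" "x \<noteq> y" "flip (x, y)"
        unfolding flipped_pairs_def flip_def by auto
      then have "flip (y, x)" unfolding flip_def using cycle_adj_sym by auto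
      with e have "(x, y) \<in> {p \<in> P. flip p} \<or> (y, x) \<in> {p \<in> P. flip p}"
        unfolding P_def by auto
      with e show "e \<in> (\<lambda>(x, y). {x, y}) ` {p \<in> P. flip p}"
        by (auto simp: insert_commute)
    qed
  qed
  finally show ?thesis .
qed

lemma cycle_adj_two_preimage_neighbours:
  assumes "n > 2" "bij_betw f {..<n} {..<n}" "x < n"
  obtains a b where "a < n" "b < n" "a \<noteq> b" "cycle_adj n (f x) (f a)" "cycle_adj n (f x) (f b)"
proof -
  have "f x < n" using assms(2,3) bij_betwE by auto
  then obtain y z where yz: "y \<noteq> z" "cycle_adj n (f x) y" "cycle_adj n (f x) z"
    using assms(1) cycle_adj_exists_two_neighbours by blast
  then have "y \<in> f ` {..<n}" "z \<in> f ` {..<n}"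
    unfolding bij_betw_imp_surj_on[OF assms(2)] by (auto simp: cycle_adj_def)
  then obtain a b where "a < n" "b < n" "y = f a" "z = f b" by blast
  with yz show thesis using that by blast
qed

lemma cycle_adj_new_neighbour:
  assumes "n > 2" "bij_betw f {..<n} {..<n}"
    and "cycle_adj n u v" "\<not> cycle_adj n (f u) (f v)"
  obtains z where "z < n" "z \<noteq> v" "\<not> cycle_adj n u z" "cycle_adj n (f u) (f z)"
proof -
  have "u < n" using assms(3) by (simp add: cycle_adj_def)
  then obtain a b where ab: "a < n" "b < n" "a \<noteq> b" "cycle_adj n (f u) (f a)" "cycle_adj n (f u) (f b)"
    using assms(1,2) cycle_adj_two_preimage_neighbours by metis
  with assms(4) have "a \<noteq> v" "b \<noteq> v" by auto
  with ab(3) assms(3) have "\<not> cycle_adj n u a \<or> \<not> cycle_adj n u b"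
    using cycle_adj_at_most_two by blast
  with ab \<open>a \<noteq> v\<close> \<open>b \<noteq> v\<close> show thesis using that by blast
qed

lemma cycle_adj_two_new_neighbours:
  assumes "n > 2" "bij_betw f {..<n} {..<n}" "v < n"
    and "cycle_adj n v u" "cycle_adj n v w" "u \<noteq> w"
    and "\<not> cycle_adj n (f v) (f u)" "\<not> cycle_adj n (f v) (f w)"
  obtains a b where "a < n" "b < n" "a \<noteq> b" "a \<notin> {u, v, w}" "b \<notin> {u, v, w}"
    "\<not> cycle_adj n v a" "\<not> cycle_adj n v b" "cycle_adj n (f v) (f a)" "cycle_adj n (f v) (f b)"
proof -
  obtain a b where ab: "a < n" "b < n" "a \<noteq> b" "cycle_adj n (f v) (f a)" "cycle_adj n (f v) (f b)"
    using cycle_adj_two_preimage_neighbours[OF assms(1-3)] by metis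
  have "a \<notin> {u, v, w}" "b \<notin> {u, v, w}"
    using ab assms(1,7,8) cycle_adj_irrefl[of n "f v"] by auto
  moreover from this have "\<not> cycle_adj n v a" "\<not> cycle_adj n v b"
    using cycle_adj_at_most_two[OF assms(4,5)] assms(6) by blast+
  ultimately show thesis
    using ab that by blast
qed

theorem lemma2p4:
  fixes n :: nat and f :: "nat \<Rightarrow> nat" and u v w :: nat
  assumes "n > 5"
    and "bij_betw f {..<n} {..<n}"
    and "v < n" and "u < n" and "w < n"
    and "u \<noteq> w" and "u \<noteq> v" and "w \<noteq> v"
    and "\<not> cocycle_adj n v u" and "\<not> cocycle_adj n v w"
    and "cocycle_adj n (f v) (f u)" and "cocycle_adj n (f v) (f w)"
  shows "delta_total n f > 4"
proof -
  have n: "n > 2" "n > 4" using assms(1) by auto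
  have vu: "cycle_adj n v u" "\<not> cycle_adj n (f v) (f u)"
    using assms(3,4,7,9,11) by (auto simp: cocycle_adj_def)
  have vw: "cycle_adj n v w" "\<not> cycle_adj n (f v) (f w)"
    using assms(3,5,8,10,12) by (auto simp: cocycle_adj_def)
  obtain a b where ab: "a < n" "b < n" "a \<noteq> b" "a \<notin> {u, v, w}" "b \<notin> {u, v, w}"
    "\<not> cycle_adj n v a" "\<not> cycle_adj n v b" "cycle_adj n (f v) (f a)" "cycle_adj n (f v) (f b)"
    using cycle_adj_two_new_neighbours[OF n(1) assms(2,3) vu(1) vw(1) assms(6) vu(2) vw(2)] by metis
  obtain z where z: "z < n" "z \<noteq> v" "\<not> cycle_adj n u z" "cycle_adj n (f u) (f z)"
    using cycle_adj_new_neighbour[OF n(1) assms(2)] vu cycle_adj_sym by metis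
  have "{{v, u}, {v, w}, {v, a}, {v, b}, {u, z}} \<subseteq> flipped_pairs n f"
    using flipped_pairsI[of n] n vu vw ab z assms(3-5) by auto
  moreover have "card {{v, u}, {v, w}, {v, a}, {v, b}, {u, z}} = 5"
    using assms(6-8) ab(3-5) z(2) by (auto simp: doubleton_eq_iff)
  ultimately have "5 \<le> card (flipped_pairs n f)"
    using card_mono finite_flipped_pairs by metis
  then show ?thesis
    using delta_total_eq_card_flipped_pairs[OF n(2) assms(2)] by simp
qed

end
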